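(* Let $\mathfrak e$ be an edge, $p\in\mathbb N$, $\tau_{\mathfrak e}>0$, let boundary data $\bar{\vec u}_{\mathfrak n},\bar{\vec r}_{\mathfrak n}\in\mathbb R^3$ be given for the two endpoints $\mathfrak n$ of $\mathfrak e$, and let $\vec f_{\mathfrak e},\vec g_{\mathfrak e}\in(L^2(\mathfrak e))^3$. Then there is a unique quadruple $\bar{\vec u}_{\mathfrak e},\bar{\vec r}_{\mathfrak e},\bar{\vec n}_{\mathfrak e},\bar{\vec m}_{\mathfrak e}\in V_p^{\mathfrak e}$ such that for all $\bar{\vec p},\bar{\vec q},\bar{\vec v},\bar{\vec w}\in V_p^{\mathfrak e}$: \begin{align*} -(C_{\vec n}^{-1}\bar{\vec n}_{\mathfrak e},\bar{\vec p})_{\mathfrak e}+(\bar{\vec u}_{\mathfrak e},\partial_x\bar{\vec p})_{\mathfrak e}-(\vec i_{\mathfrak e}\times\bar{\vec r}_{\mathfrak e},\bar{\vec p})_{\mathfrak e}&=\langle\bar{\vec u}_{\mathfrak n},\bar{\vec p}\,\nu_{\mathfrak e}\rangle_{\mathfrak e},\\ -(C_{\vec m}^{-1}\bar{\vec m}_{\mathfrak e},\bar{\vec q})_{\mathfrak e}+(\bar{\vec r}_{\mathfrak e},\partial_x\bar{\vec q})_{\mathfrak e}&=\langle\bar{\vec r}_{\mathfrak n},\bar{\vec q}\,\nu_{\mathfrak e}\rangle_{\mathfrak e},\\ (\partial_x\bar{\vec n}_{\mathfrak e},\bar{\vec v})_{\mathfrak e}+\tau_{\mathfrak e}\langle\bar{\vec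 u}_{\mathfrak e},\bar{\vec v}\rangle_{\mathfrak e}&=(\vec f_{\mathfrak e},\bar{\vec v})_{\mathfrak e}+\tau_{\mathfrak e}\langle\bar{\vec u}_{\mathfrak n},\bar{\vec v}\rangle_{\mathfrak e},\\ (\vec i_{\mathfrak e}\times\bar{\vec n}_{\mathfrak e},\bar{\vec w})_{\mathfrak e}+(\partial_x\bar{\vec m}_{\mathfrak e},\bar{\vec w})_{\mathfrak e}+\tau_{\mathfrak e}\langle\bar{\vec r}_{\mathfrak e},\bar{\vec w}\rangle_{\mathfrak e}&=(\vec g_{\mathfrak e},\bar{\vec w})_{\mathfrak e}+\tau_{\mathfrak e}\langle\bar{\vec r}_{\mathfrak n},\bar{\vec w}\rangle_{\mathfrak e}. \end{align*}
   Context: An edge $\mathfrak e$ is the straight segment in $\mathbb R^3$ joining two distinct nodes $\mathfrak n_k,\mathfrak n_\ell$ ($k<\ell$), of length $h_{\mathfrak e}=|\mathfrak n_\ell-\mathfrak n_k|$, direction $\vec i_{\mathfrak e}=(\mathfrak n_\ell-\mathfrak n_k)/h_{\mathfrak e}$, scalar normals $\nu_{\mathfrak e}(\mathfrak n_k)=-1$, $\nu_{\mathfrak e}(\mathfrak n_\ell)=+1$. $x$ is the arclength coordinate on $\mathfrak e$ increasing in direction $\vec i_{\mathfrak e}$, $\partial_x$ its derivative, $\times$ the cross product. $C_{\vec n},C_{\vec m}$ are symmetric $\mathbb R^{3\times3}$-valued functions on $\mathfrak e$ satisfying $\alpha_{\vec n}|\xi|^2\le (C_{\vec n}(x)\xi)\cdot\xi\le\beta_{\vec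 n}|\xi|^2$, $\alpha_{\vec m}|\xi|^2\le (C_{\vec m}(x)\xi)\cdot\xi\le\beta_{\vec m}|\xi|^2$ for all $\xi\in\mathbb R^3$, $x\in\mathfrak e$, with constants $0<\alpha_{\cdot},\beta_{\cdot}<\infty$. $\mathds P_p(\mathfrak e)$ is the space of polynomials on $\mathfrak e$ of degree at most $p$ and $V_p^{\mathfrak e}=(\mathds P_p(\mathfrak e))^3$. Notation: $(\vec v,\vec w)_{\mathfrak e}=\int_{\mathfrak e}\vec v\cdot\vec w\,\mathrm d\sigma$; $\langle\vec a,\vec b\rangle_{\mathfrak e}=\sum_{\mathfrak n\text{ endpoint of }\mathfrak e}\vec a(\mathfrak n)\cdot\vec b(\mathfrak n)$, also applied to quantities only defined at endpoints (e.g. $\langle\bar{\vec u}_{\mathfrak n},\bar{\vec p}\,\nu_{\mathfrak e}\rangle_{\mathfrak e}=\sum_{\mathfrak n}\bar{\vec u}_{\mathfrak n}\cdot\bar{\vec p}(\mathfrak n)\nu_{\mathfrak e}(\mathfrak n)$). *)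

theory Defs
  imports "HOL-Analysis.Analysis" "HOL-Computational_Algebra.Polynomial"
begin

text \<open>An edge from node nk to node nl (nk the node with smaller index) is parametrised
  by arclength x \<in> [0, h], h = |nl - nk|; x = 0 is nk (normal -1), x = h is nl (normal +1).\<close>

definition edge_len :: "real^3 \<Rightarrow> real^3 \<Rightarrow> real" where
  "edge_len nk nl = norm (nl - nk)"

definition edge_dir :: "real^3 \<Rightarrow> real^3 \<Rightarrow> real^3" where
  "edge_dir nk nl = (1 / edge_len nk nl) *\<^sub>R (nl - nk)"

definition Vp :: "nat \<Rightarrow> (real \<Rightarrow> real^3) set" where
  "Vp p = {v. \<forall>i. \<exists>q :: real poly. degree q \<le> p \<and> (\<forall>x. v x $ i = poly q x)}"

definition dx :: "(real \<Rightarrow> real^3) \<Rightarrow> real \<Rightarrow> real^3" where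
  "dx v x = vector_derivative v (at x)"

definition l2_edge :: "real \<Rightarrow> (real \<Rightarrow> real^3) \<Rightarrow> (real \<Rightarrow> real^3) \<Rightarrow> real" where
  "l2_edge h v w = (LINT x:{0..h}|lborel. v x \<bullet> w x)"

definition bdry_edge :: "real \<Rightarrow> (real \<Rightarrow> real^3) \<Rightarrow> (real \<Rightarrow> real^3) \<Rightarrow> real" where
  "bdry_edge h a b = a 0 \<bullet> b 0 + a h \<bullet> b h"

definition L2_edge :: "real \<Rightarrow> (real \<Rightarrow> real^3) \<Rightarrow> bool" where
  "L2_edge h f \<longleftrightarrow> (\<lambda>x. indicator {0..h} x *\<^sub>R f x) \<in> borel_measurable lborel
     \<and> set_integrable lborel {0..h} (\<lambda>x. (norm (f x))\<^sup>2)"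

definition coeff_ok :: "real \<Rightarrow> (real \<Rightarrow> real^3^3) \<Rightarrow> real \<Rightarrow> real \<Rightarrow> bool" where
  "coeff_ok h C \<alpha> \<beta> \<longleftrightarrow> 0 < \<alpha> \<and> 0 < \<beta> \<and>
     (\<forall>i j. (\<lambda>x. indicator {0..h} x * (C x $ i $ j)) \<in> borel_measurable lborel) \<and>
     (\<forall>x\<in>{0..h}. transpose (C x) = C x \<and>
        (\<forall>\<xi>. \<alpha> * (norm \<xi>)\<^sup>2 \<le> (C x *v \<xi>) \<bullet> \<xi> \<and> (C x *v \<xi>) \<bullet> \<xi> \<le> \<beta> * (norm \<xi>)\<^sup>2))"

end

theory Submission
  imports Defs "HOL-Library.Function_Algebras"
begin

text \<open>
  The discrete problem is a square linear system on the finite dimensional space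
  \<open>V = V\<^sub>p\<^sup>4\<close>, so it suffices to show that its bilinear form is nondegenerate. Testing the
  homogeneous system with \<open>(-n, -m, u, r)\<close> makes the derivative couplings cancel by symmetry of
  the \<open>L\<^sup>2\<close> product and the cross product couplings by antisymmetry, leaving
  \<open>(C\<^sub>n\<^sup>-\<^sup>1 n, n) + (C\<^sub>m\<^sup>-\<^sup>1 m, m) + \<tau>\<langle>u, u\<rangle> + \<tau>\<langle>r, r\<rangle> = 0\<close>. Hence \<open>n = m = 0\<close> and \<open>u\<close>, \<open>r\<close>
  vanish at both endpoints. The remaining equations say that \<open>u\<close> and \<open>r\<close> are orthogonal to all
  derivatives of \<open>V\<^sub>p\<close>; choosing the test function \<open>u'\<close> (resp. \<open>r'\<close>) and integrating by parts
  gives \<open>\<parallel>u'\<parallel> = \<parallel>r'\<parallel> = 0\<close>, so they are constant, hence zero.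
\<close>

section \<open>Linear algebra on finite dimensional subspaces\<close>

instantiation "fun" :: (type, real_vector) real_vector
begin
definition scaleR_fun :: "real \<Rightarrow> ('a \<Rightarrow> 'b) \<Rightarrow> 'a \<Rightarrow> 'b" where
  "scaleR_fun c f = (\<lambda>x. c *\<^sub>R f x)"
instance by standard (auto simp: scaleR_fun_def fun_eq_iff scaleR_add_right scaleR_add_left)
end

lemma scaleR_fun_apply [simp]: "(c *\<^sub>R f) x = c *\<^sub>R f x"
  by (simp add: scaleR_fun_def)

text \<open>Linearity relative to a subset: the \<open>L\<^sup>2\<close> pairing of the edge is only linear on
  integrable arguments.\<close>
definition linear_on :: "'a::real_vector set \<Rightarrow> ('a \<Rightarrow> 'b::real_vector) \<Rightarrow> bool" where
  "linear_on V f \<longleftrightarrow> (\<forall>x\<in>V. \<forall>y\<in>V. \<forall>c. f (x + c *\<^sub>R y) = f x + c *\<^sub>R f y)"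

lemma linear_onD: "linear_on V f \<Longrightarrow> x \<in> V \<Longrightarrow> y \<in> V \<Longrightarrow> f (x + c *\<^sub>R y) = f x + c *\<^sub>R f y"
  by (simp add: linear_on_def)

lemma linear_on_0:
  assumes "subspace V" "linear_on V f"
  shows "f 0 = 0"
  using linear_onD[OF assms(2), of 0 0 1] subspace_0[OF assms(1)] by simp

lemma linear_on_sum:
  assumes V: "subspace V" and f: "linear_on V f" and S: "finite S" "S \<subseteq> V"
  shows "f (\<Sum>b\<in>S. c b *\<^sub>R b) = (\<Sum>b\<in>S. c b *\<^sub>R f b)"
  using S
proof (induction S rule: finite_induct)
  case empty
  then show ?case using linear_on_0[OF V f] by simp
next
  case (insert b S)
  have "(\<Sum>b\<in>S. c b *\<^sub>R b) \<in> V"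
    using insert.prems by (intro subspace_sum[OF V] subspace_scale[OF V]) auto
  with insert show ?case
    using linear_onD[OF f, of "\<Sum>b\<in>S. c b *\<^sub>R b" b "c b"] by (simp add: add.commute)
qed

lemma linear_on_sum_span:
  assumes "finite B" "linear_on (span B) F"
  shows "F (\<Sum>b\<in>B. c b *\<^sub>R b) = (\<Sum>b\<in>B. c b *\<^sub>R F b)"
  using linear_on_sum[OF subspace_span assms(2) assms(1) span_superset] .

lemma linear_on_span_eqI:
  assumes A: "finite A" and f: "linear_on (span A) f" and g: "linear_on (span A) g"
    and eq: "\<And>a. a \<in> A \<Longrightarrow> f a = g a" and y: "y \<in> span A"
  shows "f y = g y"
proof -
  obtain c where "y = (\<Sum>a\<in>A. c a *\<^sub>R a)"
    using y span_finite[OF A] by auto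
  then show ?thesis
    using linear_on_sum[OF subspace_span f A span_superset] linear_on_sum[OF subspace_span g A span_superset]
    by (simp add: eq)
qed

lemma subspace_finite_basis:
  assumes "subspace V" "finite E" "V \<subseteq> span E"
  obtains A where "finite A" "independent A" "span A = V"
proof -
  obtain A where A: "A \<subseteq> V" "independent A" "V \<subseteq> span A"
    using basis_exists[of V] by metis
  show ?thesis
  proof (rule that)
    show "finite A"
      using independent_span_bound[OF assms(2) A(2)] A(1) assms(3) by blast
    show "span A = V"
      by (rule span_subspace[OF A(1) A(3) assms(1)])
  qed (rule A(2))
qed

lemma Times_subset_span:
  assumes "S \<subseteq> span E" "T \<subseteq> span F"
  shows "S \<times> T \<subseteq> span (E \<times> {0} \<union> {0} \<times> F)"
proof clarify
  fix s t assume "s \<in> S" "t \<in> T"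
  then have "(s, 0) \<in> span (E \<times> {0})" "(0, t) \<in> span ({0} \<times> F)"
    using assms by (auto simp: span_Times_sing1 span_Times_sing2)
  then have "(s, 0) + (0, t) \<in> span (E \<times> {0} \<union> {0} \<times> F)"
    using span_mono[of "E \<times> {0}" "E \<times> {0} \<union> {0} \<times> F"] span_mono[of "{0} \<times> F" "E \<times> {0} \<union> {0} \<times> F"]
    by (intro span_add) auto
  then show "(s, t) \<in> span (E \<times> {0} \<union> {0} \<times> F)"
    by simp
qed

lemma independent_image_linear_on:
  assumes fin: "finite B" and ind: "independent B"
    and lin: "linear_on (span B) F" and inj: "inj_on F (span B)"
  shows "independent (F ` B)"
proof (rule independent_if_scalars_zero)
  have injB: "inj_on F B"
    using inj span_superset inj_on_subset by blast
  fix c v assume "(\<Sum>w\<in>F ` B. c w *\<^sub>R w) = 0" and v: "v \<in> F ` B"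
  then have "F (\<Sum>b\<in>B. c (F b) *\<^sub>R b) = F 0"
    using linear_on_sum_span[OF fin lin, of "c \<circ> F"] linear_on_0[OF subspace_span lin]
    by (simp add: sum.reindex[OF injB])
  then have "(\<Sum>b\<in>B. c (F b) *\<^sub>R b) = 0"
    by (rule inj_onD[OF inj]) (simp_all add: span_zero span_sum span_scale span_base)
  then show "c v = 0"
    using ind v fin by (auto simp: dependent_finite)
qed (use fin in simp)

lemma linear_on_inj_on_imp_surj_on:
  assumes fin: "finite B" and ind: "independent B"
    and lin: "linear_on (span B) F" and maps: "F ` span B \<subseteq> span B" and inj: "inj_on F (span B)"
  shows "span B \<subseteq> F ` span B"
proof -
  have injB: "inj_on F B"
    using inj span_superset inj_on_subset by blast
  have span_FB: "span B \<subseteq> span (F ` B)"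
  proof (rule subsetI, rule ccontr)
    fix t assume t: "t \<in> span B" "t \<notin> span (F ` B)"
    have "F ` B \<subseteq> span B"
      using maps span_superset[of B] by blast
    then have "card (insert t (F ` B)) \<le> card B"
      using independent_span_bound[OF fin independent_insertI[OF t(2)]] t(1)
        independent_image_linear_on[OF fin ind lin inj] by simp
    moreover have "t \<notin> F ` B"
      using t(2) span_base[of t "F ` B"] by auto
    ultimately show False
      using card_image[OF injB] fin by simp
  qed
  have "span (F ` B) \<subseteq> F ` span B"
  proof
    fix t assume "t \<in> span (F ` B)"
    then obtain c where "t = (\<Sum>w\<in>F ` B. c w *\<^sub>R w)"
      using span_finite[of "F ` B"] fin by auto
    also have "\<dots> = F (\<Sum>b\<in>B. c (F b) *\<^sub>R b)"
      using linear_on_sum_span[OF fin lin, of "c \<circ> F"] by (simp add: sum.reindex[OF injB])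
    finally show "t \<in> F ` span B"
      by (auto intro: span_sum span_scale span_base)
  qed
  with span_FB show ?thesis
    by blast
qed

locale nondegenerate_bilinear_form =
  fixes A :: "'a::real_vector set" and B :: "'a \<Rightarrow> 'a \<Rightarrow> real"
  assumes finite_A: "finite A" and independent_A: "independent A"
    and linear_left: "\<And>z. z \<in> span A \<Longrightarrow> linear_on (span A) (\<lambda>x. B x z)"
    and linear_right: "\<And>z. z \<in> span A \<Longrightarrow> linear_on (span A) (B z)"
    and nondegenerate: "\<And>x. x \<in> span A \<Longrightarrow> \<forall>y\<in>span A. B x y = 0 \<Longrightarrow> x = 0"
begin

lemma eq_if_agree_on_basis:
  assumes x: "x \<in> span A" "x' \<in> span A" and agree: "\<And>a. a \<in> A \<Longrightarrow> B x a = B x' a"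
  shows "x = x'"
proof -
  have diff: "x - x' \<in> span A"
    using x by (rule span_diff)
  have "B (x - x') y = B x y - B x' y" if "y \<in> span A" for y
    using linear_onD[OF linear_left[OF that] x, of "-1"] by simp
  then have "B (x - x') a = 0" if "a \<in> A" for a
    using agree[OF that] span_base[OF that] by simp
  then have "\<forall>y\<in>span A. B (x - x') y = 0"
    using linear_on_span_eqI[OF finite_A linear_right[OF diff], of "\<lambda>_. 0"] by (simp add: linear_on_def)
  then show "x = x'"
    using nondegenerate[OF diff] by simp
qed

text \<open>Testing against the basis \<open>A\<close> turns existence into surjectivity of \<open>gram\<close> on \<open>span A\<close>;
  nondegeneracy makes \<open>gram\<close> injective.\<close>
definition gram :: "'a \<Rightarrow> 'a" where
  "gram x = (\<Sum>a\<in>A. B x a *\<^sub>R a)"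

lemma coefficients_eq_0: "(\<Sum>a\<in>A. d a *\<^sub>R a) = 0 \<Longrightarrow> a \<in> A \<Longrightarrow> d a = 0"
  using independent_A finite_A unfolding dependent_finite[OF finite_A] by blast

lemma gram_eq_iff: "gram x = (\<Sum>a\<in>A. c a *\<^sub>R a) \<longleftrightarrow> (\<forall>a\<in>A. B x a = c a)"
proof -
  have "gram x = (\<Sum>a\<in>A. c a *\<^sub>R a) \<longleftrightarrow> (\<Sum>a\<in>A. (B x a - c a) *\<^sub>R a) = 0"
    by (simp add: gram_def scaleR_diff_left sum_subtractf)
  also have "\<dots> \<longleftrightarrow> (\<forall>a\<in>A. B x a = c a)"
    using coefficients_eq_0[of "\<lambda>a. B x a - c a"] by auto
  finally show ?thesis .
qed

lemma span_subset_gram_image: "span A \<subseteq> gram ` span A"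
proof (rule linear_on_inj_on_imp_surj_on[OF finite_A independent_A])
  show "linear_on (span A) gram"
    unfolding linear_on_def gram_def
    using linear_onD[OF linear_left[OF span_base]]
    by (simp add: scaleR_add_left scaleR_sum_right sum.distrib)
  show "gram ` span A \<subseteq> span A"
    by (auto simp: gram_def intro: span_sum span_scale span_base)
  show "inj_on gram (span A)"
  proof (rule inj_onI)
    fix x x' assume "x \<in> span A" "x' \<in> span A" "gram x = gram x'"
    then show "x = x'"
      using eq_if_agree_on_basis gram_eq_iff[of x "\<lambda>a. B x' a"] by (simp add: gram_def)
  qed
qed

theorem ex1_solution:
  assumes L: "linear_on (span A) L"
  shows "\<exists>!x. x \<in> span A \<and> (\<forall>y\<in>span A. B x y = L y)"
proof -
  have solves_iff: "(\<forall>y\<in>span A. B x y = L y) \<longleftrightarrow> (\<forall>a\<in>A. B x a = L a)" if "x \<in> span A" for x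
    using linear_on_span_eqI[OF finite_A linear_right[OF that] L] span_base by blast
  have "(\<Sum>a\<in>A. L a *\<^sub>R a) \<in> gram ` span A"
    using span_subset_gram_image by (rule subsetD) (intro span_sum span_scale span_base)
  then obtain x where x: "x \<in> span A" "gram x = (\<Sum>a\<in>A. L a *\<^sub>R a)"
    by auto
  then have "\<forall>y\<in>span A. B x y = L y"
    using solves_iff gram_eq_iff by simp
  moreover have "x' = x" if "x' \<in> span A" "\<forall>y\<in>span A. B x' y = L y" for x'
    using that(2) calculation by (intro eq_if_agree_on_basis[OF that(1) x(1)]) (simp add: span_base)
  ultimately show ?thesis
    using x(1) by blast
qed

end

section \<open>Vector valued polynomials on the edge\<close>

lemma Vp_iff: "v \<in> Vp p \<longleftrightarrow> (\<exists>q. (\<forall>i. degree (q i) \<le> p) \<and> v = (\<lambda>x. \<chi> i. poly (q i) x))"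
proof
  assume "v \<in> Vp p"
  then have "\<forall>i. \<exists>q. degree q \<le> p \<and> (\<forall>x. v x $ i = poly q x)"
    by (simp add: Vp_def)
  then obtain q where "\<forall>i. degree (q i) \<le> p \<and> (\<forall>x. v x $ i = poly (q i) x)"
    by metis
  then show "\<exists>q. (\<forall>i. degree (q i) \<le> p) \<and> v = (\<lambda>x. \<chi> i. poly (q i) x)"
    by (auto simp: fun_eq_iff vec_eq_iff)
qed (auto simp: Vp_def)

lemma VpE:
  assumes "v \<in> Vp p"
  obtains q where "\<And>i. degree (q i) \<le> p" "v = (\<lambda>x. \<chi> i. poly (q i) x)"
  using assms by (auto simp: Vp_iff)

lemma subspace_Vp: "subspace (Vp p)"
  unfolding subspace_def
proof (intro conjI ballI allI)
  show "0 \<in> Vp p"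
    by (auto simp: Vp_iff fun_eq_iff vec_eq_iff intro!: exI[of _ "\<lambda>_. 0"])
next
  fix u v assume "u \<in> Vp p" "v \<in> Vp p"
  then obtain q r where "\<And>i. degree (q i) \<le> p" "u = (\<lambda>x. \<chi> i. poly (q i) x)"
    and "\<And>i. degree (r i) \<le> p" "v = (\<lambda>x. \<chi> i. poly (r i) x)"
    by (metis VpE)
  then show "u + v \<in> Vp p"
    by (auto simp: Vp_iff fun_eq_iff vec_eq_iff degree_add_le intro!: exI[of _ "\<lambda>i. q i + r i"])
next
  fix c v assume "v \<in> Vp p"
  then obtain q where "\<And>i. degree (q i) \<le> p" "v = (\<lambda>x. \<chi> i. poly (q i) x)"
    by (metis VpE)
  then show "c *\<^sub>R v \<in> Vp p"
    by (auto simp: Vp_iff fun_eq_iff vec_eq_iff intro!: exI[of _ "\<lambda>i. smult c (q i)"])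
qed

lemma sum_fun_apply: "sum f S x = (\<Sum>i\<in>S. f i x)"
  by (induction S rule: infinite_finite_induct) auto

lemma poly_eq_sum_upto:
  fixes q :: "real poly"
  assumes "degree q \<le> p"
  shows "poly q x = (\<Sum>k\<le>p. coeff q k * x ^ k)"
proof -
  have "poly q x = (\<Sum>k\<le>degree q. coeff q k * x ^ k)"
    by (rule poly_altdef)
  also have "\<dots> = (\<Sum>k\<le>p. coeff q k * x ^ k)"
    by (rule sum.mono_neutral_left) (use assms in \<open>auto simp: coeff_eq_0\<close>)
  finally show ?thesis .
qed

lemma Vp_subset_span_monomials:
  "Vp p \<subseteq> span ((\<lambda>(k, i) x. x ^ k *\<^sub>R axis i 1) ` ({..p} \<times> UNIV))"
proof
  fix v assume "v \<in> Vp p"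
  then obtain q where q: "\<And>i. degree (q i) \<le> p" "v = (\<lambda>x. \<chi> i. poly (q i) x)"
    by (metis VpE)
  have "v = (\<Sum>(k, i)\<in>{..p} \<times> UNIV. coeff (q i) k *\<^sub>R (\<lambda>x. x ^ k *\<^sub>R axis i 1))"
  proof
    fix x
    have "(\<Sum>(k, i)\<in>{..p} \<times> UNIV. coeff (q i) k *\<^sub>R (\<lambda>x. x ^ k *\<^sub>R axis i 1)) x
        = (\<Sum>i\<in>UNIV. (\<Sum>k\<le>p. coeff (q i) k * x ^ k) *\<^sub>R axis i (1::real))"
      by (simp add: sum.cartesian_product[symmetric] scaleR_sum_left sum.swap[of _ "{..p}"]
          sum_fun_apply)
    also have "\<dots> = v x"
      by (simp add: q poly_eq_sum_upto[OF q(1)] vec_eq_iff axis_def if_distrib cong: if_cong)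
    finally show "v x = (\<Sum>(k, i)\<in>{..p} \<times> UNIV. coeff (q i) k *\<^sub>R (\<lambda>x. x ^ k *\<^sub>R axis i 1)) x"
      by simp
  qed
  also have "\<dots> \<in> span ((\<lambda>(k, i) x. x ^ k *\<^sub>R axis i 1) ` ({..p} \<times> UNIV))"
  proof (rule span_sum)
    fix ki assume "ki \<in> {..p} \<times> (UNIV :: 3 set)"
    then show "(case ki of (k, i) \<Rightarrow> coeff (q i) k *\<^sub>R (\<lambda>x. x ^ k *\<^sub>R axis i 1))
        \<in> span ((\<lambda>(k, i) x. x ^ k *\<^sub>R axis i 1) ` ({..p} \<times> UNIV))"
      by (cases ki) (force intro: span_scale[OF span_base])
  qed
  finally show "v \<in> span ((\<lambda>(k, i) x. x ^ k *\<^sub>R axis i 1) ` ({..p} \<times> UNIV))" .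
qed

lemma has_vector_derivative_vec_poly:
  "((\<lambda>x. \<chi> i. poly (q i) x) has_vector_derivative (\<chi> i. poly (pderiv (q i)) x)) (at x)"
proof -
  have axis_sum: "(\<chi> i. c i) = (\<Sum>i\<in>UNIV. c i *\<^sub>R axis i (1::real))" for c
    by (simp add: vec_eq_iff axis_def if_distrib cong: if_cong)
  have "(\<lambda>x. \<chi> i. poly (q i) x) = (\<lambda>x. \<Sum>i\<in>UNIV. poly (q i) x *\<^sub>R axis i (1::real))"
    by (simp add: fun_eq_iff vec_eq_iff axis_def if_distrib cong: if_cong)
  have "((\<lambda>x. \<Sum>i\<in>UNIV. poly (q i) x *\<^sub>R axis i (1::real)) has_vector_derivative
          (\<Sum>i\<in>UNIV. poly (pderiv (q i)) x *\<^sub>R axis i 1)) (at x)"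
    using has_vector_derivative_scaleR[OF poly_DERIV has_vector_derivative_const]
    by (intro has_vector_derivative_sum) simp
  then show ?thesis
    unfolding \<open>(\<lambda>x. \<chi> i. poly (q i) x) = _\<close> axis_sum[of "\<lambda>i. poly (pderiv (q i)) x"] .
qed

lemma dx_vec_poly: "dx (\<lambda>x. \<chi> i. poly (q i) x) = (\<lambda>x. \<chi> i. poly (pderiv (q i)) x)"
  unfolding dx_def by (simp add: fun_eq_iff vector_derivative_at[OF has_vector_derivative_vec_poly])

lemma Vp_has_vector_derivative:
  assumes "v \<in> Vp p"
  shows "(v has_vector_derivative dx v x) (at x)"
proof -
  obtain q where "v = (\<lambda>x. \<chi> i. poly (q i) x)"
    using assms by (metis VpE)
  then show ?thesis
    by (simp add: dx_vec_poly has_vector_derivative_vec_poly)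
qed

lemma dx_in_Vp:
  assumes "v \<in> Vp p"
  shows "dx v \<in> Vp p"
proof -
  obtain q where q: "\<And>i. degree (q i) \<le> p" "v = (\<lambda>x. \<chi> i. poly (q i) x)"
    using assms by (metis VpE)
  have "degree (pderiv (q i)) \<le> p" for i
    using q(1)[of i] by (simp add: degree_pderiv)
  then show ?thesis
    unfolding Vp_iff q(2) dx_vec_poly by (auto intro!: exI[of _ "\<lambda>i. pderiv (q i)"])
qed

lemma linear_on_dx: "linear_on (Vp p) dx"
  unfolding linear_on_def
proof (intro ballI allI)
  fix u v c assume "u \<in> Vp p" "v \<in> Vp p"
  then obtain q r where u: "u = (\<lambda>x. \<chi> i. poly (q i) x)" and v: "v = (\<lambda>x. \<chi> i. poly (r i) x)"
    by (metis VpE)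
  have combination: "u + c *\<^sub>R v = (\<lambda>x. \<chi> i. poly (q i + smult c (r i)) x)"
    by (simp add: u v fun_eq_iff vec_eq_iff)
  show "dx (u + c *\<^sub>R v) = dx u + c *\<^sub>R dx v"
    unfolding combination unfolding u v dx_vec_poly by (simp add: pderiv_add pderiv_smult fun_eq_iff vec_eq_iff)
qed

lemma dx_add_scaleR: "u \<in> Vp p \<Longrightarrow> v \<in> Vp p \<Longrightarrow> dx (\<lambda>x. u x + c *\<^sub>R v x) = (\<lambda>x. dx u x + c *\<^sub>R dx v x)"
  using linear_onD[OF linear_on_dx, of u p v c] by (simp add: plus_fun_def scaleR_fun_def)

lemma dx_0: "dx 0 = 0"
  using linear_on_0[OF subspace_Vp linear_on_dx] .

lemma dx_uminus: "v \<in> Vp p \<Longrightarrow> dx (\<lambda>x. - v x) = (\<lambda>x. - dx v x)"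
  using dx_add_scaleR[of 0 p v "-1"] subspace_0[OF subspace_Vp] by (simp add: dx_0)

lemma continuous_on_Vp:
  assumes "v \<in> Vp p"
  shows "continuous_on S v"
proof -
  obtain q where "v = (\<lambda>x. \<chi> i. poly (q i) x)"
    using assms by (metis VpE)
  moreover have "continuous_on S (\<lambda>x. \<chi> i. poly (q i) x)"
    by (intro continuous_on_vec_lambda continuous_on_poly[OF continuous_on_id])
  ultimately show ?thesis
    by simp
qed

section \<open>Integrals over the edge\<close>

lemma set_integrable_L2_edge:
  assumes "L2_edge h f"
  shows "set_integrable lborel {0..h} f"
proof (rule set_integrable_bound)
  have "set_integrable lborel {0..h} (\<lambda>x. 1 :: real)"
    by (intro borel_integrable_atLeastAtMost' continuous_on_const)
  then show "set_integrable lborel {0..h} (\<lambda>x. 1 + (norm (f x))\<^sup>2)"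
    using assms unfolding L2_edge_def by (intro set_integral_add(1)) auto
  show "set_borel_measurable lborel {0..h} f"
    using assms by (simp add: L2_edge_def set_borel_measurable_def)
  have "t \<le> \<bar>1 + t\<^sup>2\<bar>" for t :: real
  proof -
    have "0 \<le> (t - 1)\<^sup>2 + t\<^sup>2"
      by simp
    then show ?thesis
      by (simp add: power2_eq_square algebra_simps)
  qed
  then show "AE x in lborel. x \<in> {0..h} \<longrightarrow> norm (f x) \<le> norm (1 + (norm (f x))\<^sup>2)"
    by simp
qed

lemma set_integrable_inner_continuous:
  fixes a b :: "real \<Rightarrow> 'a::euclidean_space"
  assumes a: "set_integrable lborel {0..h} a" and b: "continuous_on {0..h} b"
  shows "set_integrable lborel {0..h} (\<lambda>x. a x \<bullet> b x)"
proof -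
  obtain M where M: "\<And>x. x \<in> {0..h} \<Longrightarrow> norm (b x) \<le> M"
    using continuous_on_compact_bound[OF compact_Icc b] by blast
  have "(\<lambda>x. (indicator {0..h} x *\<^sub>R a x) \<bullet> (indicator {0..h} x *\<^sub>R b x)) \<in> borel_measurable lborel"
    using a set_measurable_continuous_on[OF _ b]
    by (intro borel_measurable_inner) (auto simp: set_integrable_def set_borel_measurable_def)
  moreover have "(\<lambda>x. (indicator {0..h} x *\<^sub>R a x) \<bullet> (indicator {0..h} x *\<^sub>R b x))
      = (\<lambda>x. indicator {0..h} x *\<^sub>R (a x \<bullet> b x))"
    by (simp add: fun_eq_iff indicator_def)
  ultimately have measurable: "set_borel_measurable lborel {0..h} (\<lambda>x. a x \<bullet> b x)"
    by (simp add: set_borel_measurable_def)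
  have bound: "norm (a x \<bullet> b x) \<le> norm (M *\<^sub>R a x)" if "x \<in> {0..h}" for x
  proof -
    have "norm (a x \<bullet> b x) \<le> norm (a x) * norm (b x)"
      by (simp add: Cauchy_Schwarz_ineq2)
    also have "\<dots> \<le> norm (a x) * \<bar>M\<bar>"
      using M[OF that] by (intro mult_left_mono) auto
    also have "\<dots> = norm (M *\<^sub>R a x)"
      by simp
    finally show ?thesis .
  qed
  show ?thesis
  proof (rule set_integrable_bound[OF _ measurable])
    show "set_integrable lborel {0..h} (\<lambda>x. M *\<^sub>R a x)"
      using a by simp
    show "AE x in lborel. x \<in> {0..h} \<longrightarrow> norm (a x \<bullet> b x) \<le> norm (M *\<^sub>R a x)"
      using bound by simp
  qed
qed

lemma set_integrable_Vp: "v \<in> Vp p \<Longrightarrow> set_integrable lborel {0..h} v"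
  by (intro borel_integrable_atLeastAtMost' continuous_on_Vp)

lemma set_integrable_cross3_Vp: "v \<in> Vp p \<Longrightarrow> set_integrable lborel {0..h} (\<lambda>x. cross3 e (v x))"
  by (intro borel_integrable_atLeastAtMost' continuous_on_cross continuous_on_const continuous_on_Vp)

lemma l2_edge_add_scaleR_left:
  assumes "set_integrable lborel {0..h} a1" "set_integrable lborel {0..h} a2" "continuous_on {0..h} b"
  shows "l2_edge h (\<lambda>x. a1 x + c *\<^sub>R a2 x) b = l2_edge h a1 b + c * l2_edge h a2 b"
  using set_integrable_inner_continuous[OF assms(1,3)] set_integrable_inner_continuous[OF assms(2,3)]
  by (simp add: l2_edge_def inner_add_left)

lemma l2_edge_add_scaleR_right:
  assumes "set_integrable lborel {0..h} a" "continuous_on {0..h} b1" "continuous_on {0..h} b2"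
  shows "l2_edge h a (\<lambda>x. b1 x + c *\<^sub>R b2 x) = l2_edge h a b1 + c * l2_edge h a b2"
  using set_integrable_inner_continuous[OF assms(1,2)] set_integrable_inner_continuous[OF assms(1,3)]
  by (simp add: l2_edge_def inner_add_right)

lemma l2_edge_commute: "l2_edge h a b = l2_edge h b a"
  by (simp add: l2_edge_def inner_commute)

lemma l2_edge_uminus_right: "l2_edge h a (\<lambda>x. - b x) = - l2_edge h a b"
  by (simp add: l2_edge_def set_lebesgue_integral_def)

lemma l2_edge_cross3_swap: "l2_edge h (\<lambda>x. cross3 e (r x)) n = - l2_edge h (\<lambda>x. cross3 e (n x)) r"
proof -
  have "cross3 e (r x) \<bullet> n x = - (cross3 e (n x) \<bullet> r x)" for x
    by (simp add: cross3_simps)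
  then show ?thesis
    by (simp add: l2_edge_def set_lebesgue_integral_def)
qed

lemma l2_edge_by_parts:
  assumes h: "0 \<le> h" and u: "u \<in> Vp p" and v: "v \<in> Vp p"
  shows "l2_edge h u (dx v) + l2_edge h (dx u) v = u h \<bullet> v h - u 0 \<bullet> v 0"
proof -
  have cont: "continuous_on {0..h} (\<lambda>x. a x \<bullet> b x)" if "a \<in> Vp p" "b \<in> Vp p" for a b
    using that by (intro continuous_on_inner continuous_on_Vp)
  have "((\<lambda>x. u x \<bullet> v x) has_vector_derivative u x \<bullet> dx v x + dx u x \<bullet> v x) (at x within {0..h})" for x
    using bounded_bilinear.has_vector_derivative[OF bounded_bilinear_inner
        Vp_has_vector_derivative[OF u] Vp_has_vector_derivative[OF v]]
    by (auto intro: has_vector_derivative_at_within simp: inner_commute)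
  then have "(LINT x:{0..h}|lborel. u x \<bullet> dx v x + dx u x \<bullet> v x) = u h \<bullet> v h - u 0 \<bullet> v 0"
    unfolding set_lebesgue_integral_def
    by (intro integral_FTC_atLeastAtMost h continuous_on_add cont u v dx_in_Vp)
  moreover have "(LINT x:{0..h}|lborel. u x \<bullet> dx v x + dx u x \<bullet> v x)
      = l2_edge h u (dx v) + l2_edge h (dx u) v"
    unfolding l2_edge_def
    by (intro set_integral_add(2) borel_integrable_atLeastAtMost' cont u v dx_in_Vp)
  ultimately show ?thesis
    by simp
qed

lemma Vp_eq_0_if_AE:
  assumes v: "v \<in> Vp p" and h: "0 < h" and ae: "AE x in lborel. x \<in> {0..h} \<longrightarrow> v x = 0"
  shows "v = 0"
proof -
  obtain q where q: "v = (\<lambda>x. \<chi> i. poly (q i) x)"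
    using v by (metis VpE)
  have "poly (q i) x = 0" if "x \<in> {0<..<h}" for i x
  proof (rule mem_closed_if_AE_lebesgue_open[where C="{x. poly (q i) x = 0}", simplified])
    show "open {0<..<h}" "closed {x. poly (q i) x = 0}" "x \<in> {0<..<h}"
      using that by (auto intro!: closed_Collect_eq continuous_on_poly[OF continuous_on_id])
    show "AE x \<in> {0<..<h} in lebesgue. poly (q i) x = 0"
      using AE_completion[OF ae] by eventually_elim (auto simp: q vec_eq_iff)
  qed
  then have "{0<..<h} \<subseteq> {x. poly (q i) x = 0}" for i
    by blast
  then have "q i = 0" for i
    using poly_roots_finite[of "q i"] infinite_Ioo[OF h] finite_subset by blast
  then show ?thesis
    by (simp add: q fun_eq_iff vec_eq_iff)
qed

lemma Vp_eq_0_if_l2_edge_eq_0: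
  assumes h: "0 < h" and v: "v \<in> Vp p" and a: "set_integrable lborel {0..h} a"
    and nonneg: "\<And>x. x \<in> {0..h} \<Longrightarrow> 0 \<le> a x \<bullet> v x"
    and definite: "\<And>x. x \<in> {0..h} \<Longrightarrow> a x \<bullet> v x = 0 \<Longrightarrow> v x = 0"
    and zero: "l2_edge h a v = 0"
  shows "v = 0"
proof (rule Vp_eq_0_if_AE[OF v h])
  have "integrable lborel (\<lambda>x. indicator {0..h} x *\<^sub>R (a x \<bullet> v x))"
    using set_integrable_inner_continuous[OF a continuous_on_Vp[OF v]] by (simp add: set_integrable_def)
  moreover have "AE x in lborel. 0 \<le> indicator {0..h} x *\<^sub>R (a x \<bullet> v x)"
    using nonneg by (simp add: indicator_def)
  ultimately have "AE x in lborel. indicator {0..h} x *\<^sub>R (a x \<bullet> v x) = 0"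
    using zero by (simp add: l2_edge_def set_lebesgue_integral_def integral_nonneg_eq_0_iff_AE)
  then show "AE x in lborel. x \<in> {0..h} \<longrightarrow> v x = 0"
    by eventually_elim (auto simp: indicator_def intro: definite)
qed

lemma Vp_eq_0_if_orthogonal_to_dx:
  assumes h: "0 < h" and w: "w \<in> Vp p" and ends: "w 0 = 0" "w h = 0"
    and orthogonal: "\<forall>q\<in>Vp p. l2_edge h w (dx q) = 0"
  shows "w = 0"
proof -
  have "l2_edge h (dx w) (dx w) = 0"
    using l2_edge_by_parts[of h w p "dx w"] h w dx_in_Vp orthogonal ends by simp
  then have "dx w = 0"
    using h dx_in_Vp[OF w] continuous_on_Vp[OF dx_in_Vp[OF w]]
    by (intro Vp_eq_0_if_l2_edge_eq_0[where a="dx w"] borel_integrable_atLeastAtMost') auto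
  then obtain c where "\<And>x. w x = c"
    using Vp_has_vector_derivative[OF w] has_vector_derivative_zero_constant[of UNIV w]
    by (metis convex_UNIV UNIV_I zero_fun_apply)
  then show ?thesis
    using ends by (simp add: fun_eq_iff)
qed

section \<open>The coefficient matrices\<close>

lemma invertible_imp_mult_matrix_inv: "invertible A \<Longrightarrow> A *v (matrix_inv A *v y) = y"
  unfolding invertible_def matrix_inv_def
  by (metis (mono_tags, lifting) matrix_vector_mul_assoc matrix_vector_mul_lid someI_ex)

lemma coeff_ok_coercive:
  assumes "coeff_ok h C \<alpha> \<beta>" "x \<in> {0..h}"
  shows "\<alpha> * (norm z)\<^sup>2 \<le> (C x *v z) \<bullet> z"
  using assms by (simp add: coeff_ok_def)

lemma coeff_ok_invertible:
  assumes C: "coeff_ok h C \<alpha> \<beta>" and x: "x \<in> {0..h}"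
  shows "invertible (C x)"
  unfolding invertible_left_inverse matrix_left_invertible_ker
proof (intro allI impI)
  fix z assume "C x *v z = 0"
  then have "\<alpha> * (norm z)\<^sup>2 \<le> 0"
    using coeff_ok_coercive[OF C x, of z] by simp
  moreover have "0 < \<alpha>"
    using C by (simp add: coeff_ok_def)
  ultimately show "z = 0"
    by (simp add: mult_le_0_iff)
qed

lemma coeff_ok_matrix_inv:
  assumes "coeff_ok h C \<alpha> \<beta>" "x \<in> {0..h}"
  shows "C x *v (matrix_inv (C x) *v y) = y"
  using coeff_ok_invertible[OF assms] by (rule invertible_imp_mult_matrix_inv)

lemma coeff_ok_matrix_inv_coercive:
  assumes C: "coeff_ok h C \<alpha> \<beta>" and x: "x \<in> {0..h}"
  shows "\<alpha> * (norm (matrix_inv (C x) *v y))\<^sup>2 \<le> (matrix_inv (C x) *v y) \<bullet> y"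
  using coeff_ok_coercive[OF C x, of "matrix_inv (C x) *v y"]
  by (simp add: coeff_ok_matrix_inv[OF C x] inner_commute)

lemma coeff_ok_matrix_inv_bound:
  assumes C: "coeff_ok h C \<alpha> \<beta>" and x: "x \<in> {0..h}"
  shows "norm (matrix_inv (C x) *v y) \<le> norm y / \<alpha>"
proof -
  define z where "z = matrix_inv (C x) *v y"
  have "\<alpha> * (norm z)\<^sup>2 \<le> z \<bullet> y"
    unfolding z_def by (rule coeff_ok_matrix_inv_coercive[OF C x])
  also have "\<dots> \<le> norm z * norm y"
    by (rule norm_cauchy_schwarz)
  finally have "\<alpha> * norm z * norm z \<le> norm y * norm z"
    by (simp add: power2_eq_square algebra_simps)
  then have "\<alpha> * norm z \<le> norm y"
    by (cases "norm z = 0") (auto simp: mult_le_cancel_right)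
  then show ?thesis
    using C by (simp add: z_def coeff_ok_def field_simps)
qed

lemma coeff_ok_matrix_inv_nonneg:
  assumes C: "coeff_ok h C \<alpha> \<beta>" and x: "x \<in> {0..h}"
  shows "0 \<le> (matrix_inv (C x) *v y) \<bullet> y"
  using coeff_ok_matrix_inv_coercive[OF C x, of y] C
  by (smt (verit) coeff_ok_def mult_nonneg_nonneg zero_le_power2)

lemma borel_measurable_det:
  assumes [measurable]: "\<And>i j. (\<lambda>x. A x $ i $ j) \<in> borel_measurable M"
  shows "(\<lambda>x. det (A x :: real^'n^'n)) \<in> borel_measurable M"
  unfolding det_def
  by (intro borel_measurable_sum borel_measurable_times borel_measurable_const
      borel_measurable_prod assms)

lemma borel_measurable_vec:
  assumes "\<And>i. (\<lambda>x. f x $ i) \<in> borel_measurable M"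
  shows "(f :: 'a \<Rightarrow> real^'n) \<in> borel_measurable M"
proof -
  have "f = (\<lambda>x. \<Sum>i\<in>UNIV. f x $ i *\<^sub>R axis i 1)"
    by (simp add: fun_eq_iff vec_eq_iff axis_def if_distrib cong: if_cong)
  also have "\<dots> \<in> borel_measurable M"
    using assms by (intro borel_measurable_sum borel_measurable_scaleR borel_measurable_const)
  finally show ?thesis .
qed

text \<open>Cramer's rule writes the entries of \<open>C\<^sup>-\<^sup>1 n\<close> as quotients of determinants, whose
  measurability reduces to that of the entries of \<open>C\<close>.\<close>
lemma set_borel_measurable_matrix_inv_mult:
  assumes C: "coeff_ok h C \<alpha> \<beta>" and n: "continuous_on {0..h} n"
  shows "set_borel_measurable lborel {0..h} (\<lambda>x. matrix_inv (C x) *v n x)"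
proof -
  define C' where "C' x = (\<chi> i j. indicator {0..h} x * C x $ i $ j)" for x
  define n' where "n' x = indicator {0..h} x *\<^sub>R n x" for x
  define cramer where "cramer x = (\<chi> k. det (\<chi> i j. if j = k then n' x $ i else C' x $ i $ j) / det (C' x))"
    for x
  have C'_measurable: "(\<lambda>x. C' x $ i $ j) \<in> borel_measurable borel" for i j
    using C by (simp add: C'_def coeff_ok_def)
  have "n' \<in> borel_measurable lborel"
    using set_measurable_continuous_on[OF _ n] by (simp add: n'_def[abs_def] set_borel_measurable_def)
  then have n'_measurable: "(\<lambda>x. n' x $ i) \<in> borel_measurable borel" for i
    using measurable_compose[OF _ borel_measurable_nth] by simp
  have "(\<lambda>x. if j = k then n' x $ i else C' x $ i $ j) \<in> borel_measurable borel" for i j k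
    by (cases "j = k") (simp_all add: C'_measurable n'_measurable)
  then have "(\<lambda>x. cramer x $ k) \<in> borel_measurable lborel" for k
    unfolding cramer_def vec_lambda_beta
    by (intro borel_measurable_divide borel_measurable_det) (simp_all add: C'_measurable)
  then have "cramer \<in> borel_measurable lborel"
    by (rule borel_measurable_vec)
  moreover have "cramer x = matrix_inv (C x) *v n x" if x: "x \<in> {0..h}" for x
  proof -
    have "C' x = C x" "n' x = n x"
      using x by (simp_all add: C'_def n'_def vec_eq_iff)
    then have "cramer x = (\<chi> k. det (\<chi> i j. if j = k then n x $ i else C x $ i $ j) / det (C x))"
      by (simp add: cramer_def cong: if_cong)
    also have "\<dots> = matrix_inv (C x) *v n x"
      using cramer[OF coeff_ok_invertible[OF C x, unfolded invertible_det_nz],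
          of "matrix_inv (C x) *v n x" "n x"] coeff_ok_matrix_inv[OF C x] by simp
    finally show ?thesis .
  qed
  then have "(\<lambda>x. indicator {0..h} x *\<^sub>R (matrix_inv (C x) *v n x))
      = (\<lambda>x. indicator {0..h} x *\<^sub>R cramer x)"
    by (auto simp: fun_eq_iff indicator_def)
  ultimately show ?thesis
    unfolding set_borel_measurable_def by simp
qed

lemma set_integrable_matrix_inv_mult:
  assumes C: "coeff_ok h C \<alpha> \<beta>" and n: "continuous_on {0..h} n"
  shows "set_integrable lborel {0..h} (\<lambda>x. matrix_inv (C x) *v n x)"
proof (rule set_integrable_bound[OF _ set_borel_measurable_matrix_inv_mult[OF C n]])
  show "set_integrable lborel {0..h} (\<lambda>x. norm (n x) / \<alpha>)"
    using borel_integrable_atLeastAtMost'[OF continuous_on_norm[OF n]] by simp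
  have "0 < \<alpha>"
    using C by (simp add: coeff_ok_def)
  then show "AE x in lborel. x \<in> {0..h} \<longrightarrow> norm (matrix_inv (C x) *v n x) \<le> norm (norm (n x) / \<alpha>)"
    using coeff_ok_matrix_inv_bound[OF C] by simp
qed

lemma l2_edge_matrix_inv_nonneg:
  assumes "coeff_ok h C \<alpha> \<beta>"
  shows "0 \<le> l2_edge h (\<lambda>x. matrix_inv (C x) *v n x) n"
  unfolding l2_edge_def set_lebesgue_integral_def
  using coeff_ok_matrix_inv_nonneg[OF assms] by (intro integral_nonneg_AE AE_I2) (simp add: indicator_def)

lemma Vp_eq_0_if_l2_edge_matrix_inv_eq_0:
  assumes C: "coeff_ok h C \<alpha> \<beta>" and h: "0 < h" and n: "n \<in> Vp p"
    and zero: "l2_edge h (\<lambda>x. matrix_inv (C x) *v n x) n = 0"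
  shows "n = 0"
proof (rule Vp_eq_0_if_l2_edge_eq_0[OF h n _ _ _ zero])
  show "set_integrable lborel {0..h} (\<lambda>x. matrix_inv (C x) *v n x)"
    by (rule set_integrable_matrix_inv_mult[OF C continuous_on_Vp[OF n]])
  show "0 \<le> (matrix_inv (C x) *v n x) \<bullet> n x" if "x \<in> {0..h}" for x
    by (rule coeff_ok_matrix_inv_nonneg[OF C that])
  show "n x = 0" if x: "x \<in> {0..h}" and "(matrix_inv (C x) *v n x) \<bullet> n x = 0" for x
  proof -
    have "\<alpha> * (norm (matrix_inv (C x) *v n x))\<^sup>2 \<le> 0"
      using coeff_ok_matrix_inv_coercive[OF C x, of "n x"] that(2) by simp
    then have "matrix_inv (C x) *v n x = 0"
      using C by (simp add: coeff_ok_def mult_le_0_iff)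
    then show "n x = 0"
      using coeff_ok_matrix_inv[OF C x, of "n x"] by simp
  qed
qed

section \<open>The discrete edge problem\<close>

type_synonym vfield = "real \<Rightarrow> real^3"

locale edge_problem =
  fixes h \<tau> :: real and ie :: "real^3" and Cn Cm :: "real \<Rightarrow> real^3^3" and \<alpha>n \<beta>n \<alpha>m \<beta>m :: real
    and p :: nat and uk ul rk rl :: "real^3" and f g :: vfield
  assumes h_pos: "0 < h" and \<tau>_pos: "0 < \<tau>"
    and Cn: "coeff_ok h Cn \<alpha>n \<beta>n" and Cm: "coeff_ok h Cm \<alpha>m \<beta>m"
    and f: "L2_edge h f" and g: "L2_edge h g"
begin

definition weak_solution :: "vfield \<Rightarrow> vfield \<Rightarrow> vfield \<Rightarrow> vfield \<Rightarrow> bool"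
  where "weak_solution u r n m \<longleftrightarrow> u \<in> Vp p \<and> r \<in> Vp p \<and> n \<in> Vp p \<and> m \<in> Vp p \<and>
    (\<forall>pp \<in> Vp p. - l2_edge h (\<lambda>x. matrix_inv (Cn x) *v n x) pp + l2_edge h u (dx pp)
        - l2_edge h (\<lambda>x. cross3 ie (r x)) pp
      = - (uk \<bullet> pp 0) + ul \<bullet> pp h) \<and>
    (\<forall>q \<in> Vp p. - l2_edge h (\<lambda>x. matrix_inv (Cm x) *v m x) q + l2_edge h r (dx q)
      = - (rk \<bullet> q 0) + rl \<bullet> q h) \<and>
    (\<forall>v \<in> Vp p. l2_edge h (dx n) v + \<tau> * bdry_edge h u v
      = l2_edge h f v + \<tau> * (uk \<bullet> v 0 + ul \<bullet> v h)) \<and>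
    (\<forall>w \<in> Vp p. l2_edge h (\<lambda>x. cross3 ie (n x)) w + l2_edge h (dx m) w + \<tau> * bdry_edge h r w
      = l2_edge h g w + \<tau> * (rk \<bullet> w 0 + rl \<bullet> w h))"

abbreviation V4 :: "(vfield \<times> vfield \<times> vfield \<times> vfield) set" where
  "V4 \<equiv> Vp p \<times> Vp p \<times> Vp p \<times> Vp p"

definition form :: "vfield \<times> vfield \<times> vfield \<times> vfield \<Rightarrow> vfield \<times> vfield \<times> vfield \<times> vfield \<Rightarrow> real"
  where "form = (\<lambda>(u, r, n, m) (pp, q, v, w).
    - l2_edge h (\<lambda>x. matrix_inv (Cn x) *v n x) pp + l2_edge h u (dx pp)
      - l2_edge h (\<lambda>x. cross3 ie (r x)) pp
    - l2_edge h (\<lambda>x. matrix_inv (Cm x) *v m x) q + l2_edge h r (dx q)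
    + l2_edge h (dx n) v + \<tau> * bdry_edge h u v
    + l2_edge h (\<lambda>x. cross3 ie (n x)) w + l2_edge h (dx m) w + \<tau> * bdry_edge h r w)"

definition load :: "vfield \<times> vfield \<times> vfield \<times> vfield \<Rightarrow> real"
  where "load = (\<lambda>(pp, q, v, w).
    - (uk \<bullet> pp 0) + ul \<bullet> pp h - (rk \<bullet> q 0) + rl \<bullet> q h
    + l2_edge h f v + \<tau> * (uk \<bullet> v 0 + ul \<bullet> v h) + l2_edge h g w + \<tau> * (rk \<bullet> w 0 + rl \<bullet> w h))"

lemma set_integrable_matrix_inv_Vp:
  "n \<in> Vp p \<Longrightarrow> set_integrable lborel {0..h} (\<lambda>x. matrix_inv (Cn x) *v n x)"
  "m \<in> Vp p \<Longrightarrow> set_integrable lborel {0..h} (\<lambda>x. matrix_inv (Cm x) *v m x)"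
  using set_integrable_matrix_inv_mult[OF Cn] set_integrable_matrix_inv_mult[OF Cm] continuous_on_Vp
  by blast+

lemmas linearity_simps = l2_edge_add_scaleR_left l2_edge_add_scaleR_right dx_add_scaleR
  set_integrable_Vp[where p = p] set_integrable_cross3_Vp[where p = p] set_integrable_matrix_inv_Vp
  continuous_on_Vp[where p = p] dx_in_Vp
  plus_fun_def matrix_vector_right_distrib matrix_vector_mult_scaleR cross_add_right cross_mult_right
  bdry_edge_def inner_add_left inner_add_right algebra_simps

lemma linear_on_form_left: "T \<in> V4 \<Longrightarrow> linear_on V4 (\<lambda>U. form U T)"
  unfolding linear_on_def by (auto simp: form_def linearity_simps)

lemma linear_on_form_right: "U \<in> V4 \<Longrightarrow> linear_on V4 (form U)"
  unfolding linear_on_def by (auto simp: form_def linearity_simps)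

lemma linear_on_load: "linear_on V4 load"
  using set_integrable_L2_edge[OF f] set_integrable_L2_edge[OF g]
  unfolding linear_on_def by (auto simp: load_def linearity_simps)

lemma form_split:
  "form U (pp, q, v, w) = form U (pp, 0, 0, 0) + form U (0, q, 0, 0) + form U (0, 0, v, 0) + form U (0, 0, 0, w)"
  by (cases U) (simp add: form_def dx_0 l2_edge_def bdry_edge_def)

lemma load_split:
  "load (pp, q, v, w) = load (pp, 0, 0, 0) + load (0, q, 0, 0) + load (0, 0, v, 0) + load (0, 0, 0, w)"
  by (simp add: load_def l2_edge_def)

lemma weak_solution_iff_components:
  "weak_solution u r n m \<longleftrightarrow> (u, r, n, m) \<in> V4 \<and>
    (\<forall>pp\<in>Vp p. form (u, r, n, m) (pp, 0, 0, 0) = load (pp, 0, 0, 0)) \<and>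
    (\<forall>q\<in>Vp p. form (u, r, n, m) (0, q, 0, 0) = load (0, q, 0, 0)) \<and>
    (\<forall>v\<in>Vp p. form (u, r, n, m) (0, 0, v, 0) = load (0, 0, v, 0)) \<and>
    (\<forall>w\<in>Vp p. form (u, r, n, m) (0, 0, 0, w) = load (0, 0, 0, w))"
  by (simp add: weak_solution_def form_def load_def dx_0 l2_edge_def bdry_edge_def)

lemma weak_solution_iff:
  "weak_solution u r n m \<longleftrightarrow> (u, r, n, m) \<in> V4 \<and> (\<forall>T\<in>V4. form (u, r, n, m) T = load T)"
proof
  assume "weak_solution u r n m"
  note components = this[unfolded weak_solution_iff_components]
  have "form (u, r, n, m) (pp, q, v, w) = load (pp, q, v, w)"
    if "pp \<in> Vp p" "q \<in> Vp p" "v \<in> Vp p" "w \<in> Vp p" for pp q v w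
    using components that by (subst form_split, subst load_split) simp
  with components show "(u, r, n, m) \<in> V4 \<and> (\<forall>T\<in>V4. form (u, r, n, m) T = load T)"
    by auto
next
  assume "(u, r, n, m) \<in> V4 \<and> (\<forall>T\<in>V4. form (u, r, n, m) T = load T)"
  then show "weak_solution u r n m"
    unfolding weak_solution_iff_components using subspace_0[OF subspace_Vp] by auto
qed

lemma form_energy:
  assumes "u \<in> Vp p" "r \<in> Vp p" "n \<in> Vp p" "m \<in> Vp p"
  shows "form (u, r, n, m) (- n, - m, u, r)
    = l2_edge h (\<lambda>x. matrix_inv (Cn x) *v n x) n + l2_edge h (\<lambda>x. matrix_inv (Cm x) *v m x) m
      + \<tau> * bdry_edge h u u + \<tau> * bdry_edge h r r"
  using assms l2_edge_cross3_swap[of h ie r n]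
  by (simp add: form_def dx_uminus fun_Compl_def l2_edge_uminus_right l2_edge_commute[of h u "dx n"]
      l2_edge_commute[of h r "dx m"])

lemma form_energy_eq_0_imp:
  assumes in_Vp: "u \<in> Vp p" "r \<in> Vp p" "n \<in> Vp p" "m \<in> Vp p"
    and zero: "form (u, r, n, m) (- n, - m, u, r) = 0"
  shows "n = 0" "m = 0" "u 0 = 0" "u h = 0" "r 0 = 0" "r h = 0"
proof -
  have "0 \<le> l2_edge h (\<lambda>x. matrix_inv (Cn x) *v n x) n" "0 \<le> l2_edge h (\<lambda>x. matrix_inv (Cm x) *v m x) m"
    using l2_edge_matrix_inv_nonneg[OF Cn] l2_edge_matrix_inv_nonneg[OF Cm] by auto
  moreover have "0 \<le> \<tau> * bdry_edge h u u" "0 \<le> \<tau> * bdry_edge h r r"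
    using \<tau>_pos by (simp_all add: bdry_edge_def)
  ultimately have "l2_edge h (\<lambda>x. matrix_inv (Cn x) *v n x) n = 0"
    "l2_edge h (\<lambda>x. matrix_inv (Cm x) *v m x) m = 0" "bdry_edge h u u = 0" "bdry_edge h r r = 0"
    using zero \<tau>_pos by (simp_all add: form_energy[OF in_Vp] add_nonneg_eq_0_iff)
  then show "n = 0" "m = 0" "u 0 = 0" "u h = 0" "r 0 = 0" "r h = 0"
    using Vp_eq_0_if_l2_edge_matrix_inv_eq_0[OF Cn h_pos in_Vp(3)]
      Vp_eq_0_if_l2_edge_matrix_inv_eq_0[OF Cm h_pos in_Vp(4)]
    by (auto simp: bdry_edge_def add_nonneg_eq_0_iff)
qed

lemma form_nondegenerate:
  assumes U: "U \<in> V4" and zero: "\<forall>T\<in>V4. form U T = 0"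
  shows "U = 0"
proof -
  obtain u r n m where U_def: "U = (u, r, n, m)" and in_Vp: "u \<in> Vp p" "r \<in> Vp p" "n \<in> Vp p" "m \<in> Vp p"
    using U by auto
  have "- n \<in> Vp p" "- m \<in> Vp p" "0 \<in> Vp p"
    using in_Vp subspace_neg[OF subspace_Vp] subspace_0[OF subspace_Vp] by auto
  then have "form (u, r, n, m) (- n, - m, u, r) = 0"
    using zero in_Vp by (simp add: U_def)
  note energy = form_energy_eq_0_imp[OF in_Vp this]
  have tested: "form (u, r, 0, 0) T = 0" if "T \<in> V4" for T
    using zero that unfolding U_def energy(1,2) by blast
  have "\<forall>q\<in>Vp p. l2_edge h r (dx q) = 0"
    using tested[of "(0, _, 0, 0)"] \<open>0 \<in> Vp p\<close> by (simp add: form_def dx_0 bdry_edge_def l2_edge_def)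
  then have r: "r = 0"
    by (rule Vp_eq_0_if_orthogonal_to_dx[OF h_pos in_Vp(2) energy(5,6)])
  have "\<forall>pp\<in>Vp p. l2_edge h u (dx pp) = 0"
    using tested[of "(_, 0, 0, 0)"] \<open>0 \<in> Vp p\<close> by (simp add: r form_def dx_0 bdry_edge_def l2_edge_def)
  then have "u = 0"
    by (rule Vp_eq_0_if_orthogonal_to_dx[OF h_pos in_Vp(1) energy(3,4)])
  with energy(1,2) r show "U = 0"
    by (simp add: U_def zero_prod_def)
qed

lemma weak_solution_ex1: "\<exists>!(u, r, n, m). weak_solution u r n m"
proof -
  let ?E = "(\<lambda>(k, i) x. x ^ k *\<^sub>R axis i 1) ` ({..p} \<times> UNIV)"
  let ?E4 = "?E \<times> {0} \<union> {0} \<times> (?E \<times> {0} \<union> {0} \<times> (?E \<times> {0} \<union> {0} \<times> ?E))"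
  have "subspace V4"
    by (intro subspace_Times subspace_Vp)
  moreover have "finite ?E4"
    by simp
  moreover have "V4 \<subseteq> span ?E4"
    by (intro Times_subset_span Vp_subset_span_monomials)
  ultimately obtain A where A: "finite A" "independent A" "span A = V4"
    by (rule subspace_finite_basis)
  interpret nondegenerate_bilinear_form A form
    by unfold_locales (simp_all add: A linear_on_form_left linear_on_form_right form_nondegenerate)
  have "\<exists>!U. U \<in> V4 \<and> (\<forall>T\<in>V4. form U T = load T)"
    using ex1_solution linear_on_load by (simp add: A)
  moreover have "(\<lambda>(u, r, n, m). weak_solution u r n m) = (\<lambda>U. U \<in> V4 \<and> (\<forall>T\<in>V4. form U T = load T))"
  proof
    fix U :: "vfield \<times> vfield \<times> vfield \<times> vfield"
    show "(case U of (u, r, n, m) \<Rightarrow> weak_solution u r n m) \<longleftrightarrow> U \<in> V4 \<and> (\<forall>T\<in>V4. form U T = load T)"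
      by (cases U) (simp only: weak_solution_iff prod.case)
  qed
  ultimately show ?thesis
    by (simp only:)
qed

end

theorem lemma3p4:
  fixes nk nl :: "real^3" and p :: nat and \<tau> :: real
    and uk ul rk rl :: "real^3"
    and f g :: "real \<Rightarrow> real^3"
    and Cn Cm :: "real \<Rightarrow> real^3^3" and \<alpha>n \<beta>n \<alpha>m \<beta>m :: real
  defines "h \<equiv> edge_len nk nl" and "ie \<equiv> edge_dir nk nl"
  assumes "nk \<noteq> nl"
    and "\<tau> > 0"
    and "coeff_ok h Cn \<alpha>n \<beta>n" and "coeff_ok h Cm \<alpha>m \<beta>m"
    and "L2_edge h f" and "L2_edge h g"
  shows "\<exists>!(u, r, n, m). u \<in> Vp p \<and> r \<in> Vp p \<and> n \<in> Vp p \<and> m \<in> Vp p \<and>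
    (\<forall>pp \<in> Vp p. - l2_edge h (\<lambda>x. matrix_inv (Cn x) *v n x) pp + l2_edge h u (dx pp)
        - l2_edge h (\<lambda>x. cross3 ie (r x)) pp
      = - (uk \<bullet> pp 0) + ul \<bullet> pp h) \<and>
    (\<forall>q \<in> Vp p. - l2_edge h (\<lambda>x. matrix_inv (Cm x) *v m x) q + l2_edge h r (dx q)
      = - (rk \<bullet> q 0) + rl \<bullet> q h) \<and>
    (\<forall>v \<in> Vp p. l2_edge h (dx n) v + \<tau> * bdry_edge h u v
      = l2_edge h f v + \<tau> * (uk \<bullet> v 0 + ul \<bullet> v h)) \<and>
    (\<forall>w \<in> Vp p. l2_edge h (\<lambda>x. cross3 ie (n x)) w + l2_edge h (dx m) w + \<tau> * bdry_edge h r w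
      = l2_edge h g w + \<tau> * (rk \<bullet> w 0 + rl \<bullet> w h))"
proof -
  have "0 < h"
    using assms(3) by (simp add: h_def edge_len_def)
  then interpret edge_problem h \<tau> ie Cn Cm \<alpha>n \<beta>n \<alpha>m \<beta>m p uk ul rk rl f g
    using assms(4-8) by unfold_locales
  show ?thesis
    using weak_solution_ex1 unfolding weak_solution_def .
qed

end
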